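(* Let $X$ be a compact topological space, let $D\subseteq X$, let $\overline{D}$ be the closure of $D$ in $X$, and put $\partial D:=\overline{D}\setminus D$. Let $\overline{\mathbb{C}}=\mathbb{C}\cup\{\infty\}$ be the Riemann sphere and let $f\colon\overline{D}\to\overline{\mathbb{C}}$ be a continuous map such that $f(D)$ is open in $\overline{\mathbb{C}}$. Suppose $f$ is finite on $\overline{D}$, i.e. $f(\overline{D})\subseteq\mathbb{C}$. Let $E_\infty$ denote the connected component of $\infty$ in $\overline{\mathbb{C}}\setminus f(\partial D)$. Then $f(\overline{D})\subseteq\overline{\mathbb{C}}\setminus E_\infty$.
   Context: Note that $\partial D$ is defined as $\overline{D}\setminus D$. *)

theory Defs
  imports "HOL-Analysis.Analysis"
begin

text \<open>The Riemann sphere \<open>\<complex> \<union> {\<infinity>}\<close>, modelled as \<open>complex option\<close>: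
  \<open>Some z\<close> is the finite point z and \<open>None\<close> is the point at infinity.
  Its topology is the one-point (Alexandroff) compactification of \<open>\<complex>\<close>:
  U is open iff its finite part is open in \<open>\<complex>\<close> and, if U contains \<infinity>,
  U contains all points outside some disc.\<close>

definition riemann_open :: "complex option set \<Rightarrow> bool" where
  "riemann_open U \<longleftrightarrow> open {z. Some z \<in> U} \<and>
     (None \<in> U \<longrightarrow> (\<exists>r. \<forall>z. r < norm z \<longrightarrow> Some z \<in> U))"

lemma istopology_riemann_open: "istopology riemann_open"
  unfolding istopology_def
proof (intro conjI allI impI)
  fix S T assume S: "riemann_open S" and T: "riemann_open T"
  have "{z. Some z \<in> S \<inter> T} = {z. Some z \<in> S} \<inter> {z. Some z \<in> T}" by auto
  hence o: "open {z. Some z \<in> S \<inter> T}" using S T by (simp add: riemann_open_def open_Int)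
  show "riemann_open (S \<inter> T)"
    unfolding riemann_open_def
  proof (intro conjI impI)
    show "open {z. Some z \<in> S \<inter> T}" by (rule o)
    assume "None \<in> S \<inter> T"
    then obtain r1 r2 where "\<forall>z. r1 < norm z \<longrightarrow> Some z \<in> S" "\<forall>z. r2 < norm z \<longrightarrow> Some z \<in> T"
      using S T by (auto simp: riemann_open_def)
    thus "\<exists>r. \<forall>z. r < norm z \<longrightarrow> Some z \<in> S \<inter> T"
      by (intro exI[of _ "max r1 r2"]) auto
  qed
next
  fix K assume K: "\<forall>S\<in>K. riemann_open S"
  have "{z. Some z \<in> \<Union>K} = (\<Union>S\<in>K. {z. Some z \<in> S})" by auto
  hence o: "open {z. Some z \<in> \<Union>K}" using K by (auto simp: riemann_open_def)
  show "riemann_open (\<Union>K)"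
    unfolding riemann_open_def
  proof (intro conjI impI)
    show "open {z. Some z \<in> \<Union>K}" by (rule o)
    assume "None \<in> \<Union>K"
    then obtain S where "S \<in> K" "None \<in> S" by auto
    then obtain r where "\<forall>z. r < norm z \<longrightarrow> Some z \<in> S"
      using K by (auto simp: riemann_open_def)
    thus "\<exists>r. \<forall>z. r < norm z \<longrightarrow> Some z \<in> \<Union>K" using \<open>S \<in> K\<close> by blast
  qed
qed

definition riemann_sphere :: "complex option topology" where
  "riemann_sphere = topology riemann_open"

lemma openin_riemann_sphere: "openin riemann_sphere U \<longleftrightarrow> riemann_open U"
  by (simp add: riemann_sphere_def istopology_riemann_open)

lemma topspace_riemann_sphere: "topspace riemann_sphere = UNIV"
proof -
  have "riemann_open UNIV" by (simp add: riemann_open_def)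
  thus ?thesis by (metis openin_riemann_sphere openin_subset top.extremum_uniqueI)
qed

end

theory Submission
  imports Defs
begin

text \<open>The image of the compact set \<open>closure D\<close> is closed in the Hausdorff sphere, and its
  part off \<open>f ` D\<close> lies in \<open>f ` \<partial>D\<close>. Hence \<open>f ` D\<close> is relatively clopen in the connected set
  \<open>E\<^sub>\<infinity>\<close>; as \<open>\<infinity> \<in> E\<^sub>\<infinity>\<close> is not a value of \<open>f\<close>, \<open>E\<^sub>\<infinity>\<close> misses \<open>f ` closure D\<close> entirely.\<close>

lemma openin_riemann_sphere_image_Some:
  "open S \<Longrightarrow> openin riemann_sphere (Some ` S)"
  by (simp add: openin_riemann_sphere riemann_open_def image_iff)

lemma openin_riemann_sphere_neighbourhood_None:
  "openin riemann_sphere (insert None (Some ` {z. r < norm z}))"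
proof -
  have "open {z::complex. r < norm z}"
    by (intro open_Collect_less continuous_intros)
  then show ?thesis
    by (auto simp: openin_riemann_sphere riemann_open_def image_iff)
qed

lemma Hausdorff_space_riemann_sphere: "Hausdorff_space riemann_sphere"
proof -
  have separate_from_None:
    "\<exists>U V. openin riemann_sphere U \<and> openin riemann_sphere V \<and> Some a \<in> U \<and> None \<in> V \<and> disjnt U V"
    for a :: complex
  proof (intro exI conjI)
    show "openin riemann_sphere (Some ` ball a 1)"
      by (simp add: openin_riemann_sphere_image_Some)
    show "openin riemann_sphere (insert None (Some ` {z. norm a + 1 < norm z}))"
      by (rule openin_riemann_sphere_neighbourhood_None)
    have "norm z \<le> norm a + 1" if "dist a z < 1" for z
      using that norm_triangle_sub[of z a] by (simp add: dist_norm norm_minus_commute)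
    then show "disjnt (Some ` ball a 1) (insert None (Some ` {z. norm a + 1 < norm z}))"
      by (force simp: disjnt_def)
  qed auto
  have separate_Some:
    "\<exists>U V. openin riemann_sphere U \<and> openin riemann_sphere V \<and> Some a \<in> U \<and> Some b \<in> V \<and> disjnt U V"
    if "a \<noteq> b" for a b :: complex
  proof -
    obtain U V where "open U" "open V" "a \<in> U" "b \<in> V" "U \<inter> V = {}"
      using hausdorff[OF \<open>a \<noteq> b\<close>] by blast
    then show ?thesis
      by (intro exI[of _ "Some ` U"] exI[of _ "Some ` V"])
         (auto simp: openin_riemann_sphere_image_Some disjnt_def)
  qed
  show ?thesis
    unfolding Hausdorff_space_def
  proof (intro allI impI)
    fix x y :: "complex option"
    assume "x \<in> topspace riemann_sphere \<and> y \<in> topspace riemann_sphere \<and> x \<noteq> y"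
    then have "x \<noteq> y" by blast
    then show "\<exists>U V. openin riemann_sphere U \<and> openin riemann_sphere V \<and> x \<in> U \<and> y \<in> V \<and> disjnt U V"
      using separate_from_None separate_Some
      by (cases x; cases y) (auto, metis disjnt_sym)
  qed
qed

lemma closedin_image_compact_space:
  assumes "compact_space X" "closedin X S" "continuous_map (subtopology X S) Y f"
    and "Hausdorff_space Y"
  shows "closedin Y (f ` S)"
proof -
  have "compactin (subtopology X S) S"
    using assms(1,2) by (simp add: closedin_compact_space compactin_subtopology)
  then have "compactin Y (f ` S)"
    using assms(3) by (rule image_compactin)
  then show ?thesis
    using assms(4) by (simp add: compactin_imp_closedin)
qed

lemma connectedin_disjoint_closed_set:
  assumes "connectedin X C" "openin X U" "closedin X K" "U \<subseteq> K"
    and "C \<inter> (K - U) = {}" "x \<in> C" "x \<notin> K"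
  shows "C \<inter> K = {}"
proof -
  have CK: "C \<inter> K = C \<inter> U"
    using assms(4,5) by blast
  have "openin (subtopology X C) (C \<inter> K)"
    unfolding CK using assms(2) by (auto simp: openin_subtopology)
  moreover have "closedin (subtopology X C) (C \<inter> K)"
    using assms(3) by (auto simp: closedin_subtopology)
  moreover have "connected_space (subtopology X C)"
    using assms(1) by (simp add: connectedin_def)
  moreover have "x \<in> topspace (subtopology X C)" "x \<notin> C \<inter> K"
    using assms(1,6,7) by (auto simp: connectedin_def)
  ultimately show ?thesis
    unfolding connected_space_clopen_in by blast
qed

theorem mainTheorem4:
  fixes X :: "'a topology" and D :: "'a set" and f :: "'a \<Rightarrow> complex option"
  assumes "compact_space X"
    and "D \<subseteq> topspace X"
    and "continuous_map (subtopology X (X closure_of D)) riemann_sphere f"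
    and "openin riemann_sphere (f ` D)"
    and "f ` (X closure_of D) \<subseteq> range Some"
  shows "f ` (X closure_of D) \<subseteq>
           topspace riemann_sphere -
           connected_component_of_set
             (subtopology riemann_sphere (topspace riemann_sphere - f ` (X closure_of D - D))) None"
proof -
  define K where "K = X closure_of D"
  define T where "T = topspace riemann_sphere - f ` (K - D)"
  define E where "E = connected_component_of_set (subtopology riemann_sphere T) None"
  have "D \<subseteq> K"
    unfolding K_def using assms(2) by (rule closure_of_subset)
  have "None \<notin> f ` K"
    using assms(5) by (auto simp: K_def)
  have "closedin riemann_sphere (f ` K)"
    using assms(1,3) Hausdorff_space_riemann_sphere
    by (auto simp: K_def intro: closedin_image_compact_space)
  moreover have "connectedin riemann_sphere E" "E \<subseteq> T"
    using connectedin_connected_component_of[of "subtopology riemann_sphere T" None]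
      connected_component_of_subset_topspace[of "subtopology riemann_sphere T" None]
    by (auto simp: E_def connectedin_subtopology)
  moreover have "None \<in> E"
    using \<open>None \<notin> f ` K\<close> \<open>D \<subseteq> K\<close>
    by (auto simp: E_def T_def connected_component_of_refl topspace_riemann_sphere)
  ultimately have "E \<inter> f ` K = {}"
    using connectedin_disjoint_closed_set[of riemann_sphere E "f ` D" "f ` K" None]
      assms(4) \<open>D \<subseteq> K\<close> \<open>None \<notin> f ` K\<close>
    by (auto simp: T_def)
  then show ?thesis
    by (auto simp: E_def T_def K_def topspace_riemann_sphere)
qed

end
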